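(* Let $T$ be a supercritical Galton–Watson tree with finite alphabet $\mathbb{A}$ and offspring distribution $W$, let $\mathscr{A}$ be a nonempty collection of nonempty subsets of $\mathbb{A}$, and let $g_{\mathscr{A}}(s)=\mathbb{P}(W^{(s)}\notin\overline{\mathscr{A}})$ for $s\in[0,1]$. If $g_{\mathscr{A}}$ has some fixed point $<1$, then almost surely, conditioned on nonextinction, there exist infinitely many $v\in T$ such that $T^v$ contains an $\mathscr{A}$-subtree.
   Context: Trees with alphabet $\mathbb{A}$ are prefix-closed subsets of $\mathbb{A}^*$ containing the empty word; $W_T(a)=\{i:ai\in T\}$; $T^v=\{j:vj\in T\}$. The Galton–Watson tree with offspring distribution $W$ (random subset of $\mathbb{A}$, $\mathbb{P}(i\in W)>0$ for all $i$) is $T_0=\{\emptyset\}$, $T_n=\{aj:a\in T_{n-1},j\in W_a\}$ with independent copies $W_a$; supercritical means $\mathbb{E}|W|>1$; nonextinction means $T_n\neq\emptyset$ for all $n$. An $\mathscr{A}$-subtree of a tree $S$ is a tree $S'\subseteq S$ with $W_{S'}(a)\in\mathscr{A}$ for all $a\in S'$. $\overline{\mathscr{A}}=\{S\subseteq\mathbb{A}:\exists X\in\mathscr{A}, X\subseteq S\}$. $W^{(s)}=W\cap Y$ with $Y$ independent, $\mathbb{P}(Y=B)=(1-s)^{|B|}s^{|\mathbb{A}\setminus B|}$. *)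

theory Defs
  imports "HOL-Probability.Probability"
begin

definition is_tree :: "'a list set \<Rightarrow> bool" where
  "is_tree S \<longleftrightarrow> [] \<in> S \<and> (\<forall>u v. u @ v \<in> S \<longrightarrow> u \<in> S)"

definition children :: "'a list set \<Rightarrow> 'a list \<Rightarrow> 'a set" where
  "children S a = {i. a @ [i] \<in> S}"

definition subtree_at :: "'a list set \<Rightarrow> 'a list \<Rightarrow> 'a list set" where
  "subtree_at T v = {j. v @ j \<in> T}"

definition is_A_subtree :: "'a set set \<Rightarrow> 'a list set \<Rightarrow> 'a list set \<Rightarrow> bool" where
  "is_A_subtree \<A> S S' \<longleftrightarrow> is_tree S' \<and> S' \<subseteq> S \<and> (\<forall>a\<in>S'. children S' a \<in> \<A>)"

definition up_closure :: "'a set set \<Rightarrow> 'a set set" where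
  "up_closure \<A> = {S. \<exists>X\<in>\<A>. X \<subseteq> S}"

(* Sample space of the Galton-Watson tree: independent copies W_v (v a word) of the offspring
   distribution W, i.e. the infinite product measure. *)
definition GW_space :: "'a set pmf \<Rightarrow> ('a list \<Rightarrow> 'a set) measure" where
  "GW_space W = PiM UNIV (\<lambda>_. measure_pmf W)"

fun GW_gen :: "('a list \<Rightarrow> 'a set) \<Rightarrow> nat \<Rightarrow> 'a list set" where
  "GW_gen \<omega> 0 = {[]}"
| "GW_gen \<omega> (Suc n) = {a @ [j] | a j. a \<in> GW_gen \<omega> n \<and> j \<in> \<omega> a}"

definition GW_tree :: "('a list \<Rightarrow> 'a set) \<Rightarrow> 'a list set" where
  "GW_tree \<omega> = (\<Union>n. GW_gen \<omega> n)"

definition nonextinct :: "('a list \<Rightarrow> 'a set) \<Rightarrow> bool" where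
  "nonextinct \<omega> \<longleftrightarrow> (\<forall>n. GW_gen \<omega> n \<noteq> {})"

definition thin_weight :: "real \<Rightarrow> 'a::finite set \<Rightarrow> real" where
  "thin_weight s B = (1 - s) ^ card B * s ^ card (UNIV - B)"

(* g_\<A>(s) = P(W^(s) \<notin> \<A>-bar), W^(s) = W \<inter> Y with Y independent of W *)
definition g_fun :: "'a::finite set pmf \<Rightarrow> 'a set set \<Rightarrow> real \<Rightarrow> real" where
  "g_fun W \<A> s = (\<Sum>B\<in>UNIV. \<Sum>Y\<in>UNIV. pmf W B * thin_weight s Y *
       (if B \<inter> Y \<notin> up_closure \<A> then 1 else 0))"

end

theory Submission
  imports Defs
begin

text \<open>An outcome \<open>\<omega>\<close> assigns the offspring set \<open>\<omega> v\<close> to every word \<open>v\<close>; call it good if the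
  root of its tree carries an \<open>\<A>\<close>-subtree. The probability \<open>q n\<close> that there is no
  \<open>\<A>\<close>-subtree of height \<open>n\<close> satisfies \<open>q 0 = 0\<close> and \<open>q (n + 1) = g (q n)\<close>; as \<open>g\<close>
  is increasing, all \<open>q n\<close> stay below the fixed point
  \<open>s < 1\<close>, so the root is good with probability at least \<open>1 - s > 0\<close>.

  Let \<open>N\<close> be the event that no vertex is good. It is inherited by all children of the root, so
  \<open>x = P(N)\<close> satisfies \<open>x \<le> f(x)\<close> for the generating function \<open>f\<close> of \<open>|W|\<close>, and \<open>x < 1\<close>.
  The extinction probability \<open>d\<close> is a fixed point of \<open>f\<close>, and by strict convexity of \<open>f\<close>
  (supercriticality) this forces \<open>x \<le> d\<close>. Extinction implies \<open>N\<close>, since \<open>\<A>\<close>-subtrees are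
  infinite; hence \<open>N\<close> and extinction agree almost surely. On survival some vertex is therefore
  good, and every vertex of its \<open>\<A>\<close>-subtree carries an \<open>\<A>\<close>-subtree as well.\<close>

section \<open>Words, trees and \<open>\<A>\<close>-subtrees\<close>

definition descend :: "'a list \<Rightarrow> ('a list \<Rightarrow> 'b) \<Rightarrow> 'a list \<Rightarrow> 'b" where
  "descend v \<omega> = (\<lambda>w. \<omega> (v @ w))"

lemma descend_Nil [simp]: "descend [] \<omega> = \<omega>"
  by (simp add: descend_def)

lemma descend_descend [simp]: "descend u (descend v \<omega>) = descend (v @ u) \<omega>"
  by (simp add: descend_def)

lemma descend_apply: "descend v \<omega> w = \<omega> (v @ w)"
  by (simp add: descend_def)

fun along :: "(('a list \<Rightarrow> 'b) \<Rightarrow> 'a set) \<Rightarrow> ('a list \<Rightarrow> 'b) \<Rightarrow> 'a list \<Rightarrow> bool" where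
  "along F \<omega> [] = True"
| "along F \<omega> (i # v) \<longleftrightarrow> i \<in> F \<omega> \<and> along F (descend [i] \<omega>) v"

lemma along_append: "along F \<omega> (u @ w) \<longleftrightarrow> along F \<omega> u \<and> along F (descend u \<omega>) w"
  by (induction u arbitrary: \<omega>) auto

abbreviation GW_word :: "('a list \<Rightarrow> 'a set) \<Rightarrow> 'a list \<Rightarrow> bool" where
  "GW_word \<omega> v \<equiv> along (\<lambda>\<omega>. \<omega> []) \<omega> v"

lemma GW_word_snoc: "GW_word \<omega> (v @ [i]) \<longleftrightarrow> GW_word \<omega> v \<and> i \<in> \<omega> v"
  by (simp add: along_append descend_apply)

lemma GW_gen_eq: "GW_gen \<omega> n = {v. length v = n \<and> GW_word \<omega> v}"
proof (induction n)
  case (Suc n)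
  have "v \<in> GW_gen \<omega> (Suc n) \<longleftrightarrow> length v = Suc n \<and> GW_word \<omega> v" for v
    by (cases v rule: rev_exhaust) (auto simp: Suc.IH GW_word_snoc)
  then show ?case by blast
qed auto

lemma GW_gen_Suc_Cons: "GW_gen \<omega> (Suc n) = (\<Union>i\<in>\<omega> []. (#) i ` GW_gen (descend [i] \<omega>) n)"
  by (auto simp: GW_gen_eq length_Suc_conv)

lemma GW_tree_eq: "GW_tree \<omega> = {v. GW_word \<omega> v}"
  by (auto simp: GW_tree_def GW_gen_eq)

lemma subtree_at_GW_tree: "GW_word \<omega> v \<Longrightarrow> subtree_at (GW_tree \<omega>) v = GW_tree (descend v \<omega>)"
  by (auto simp: subtree_at_def GW_tree_eq along_append)

lemma is_A_subtree_subtree_at: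
  assumes "is_A_subtree \<A> S S'" "w \<in> S'"
  shows "is_A_subtree \<A> (subtree_at S w) (subtree_at S' w)"
proof -
  have S': "is_tree S'" "S' \<subseteq> S" "\<forall>a\<in>S'. children S' a \<in> \<A>"
    using assms(1) by (auto simp: is_A_subtree_def)
  have "is_tree (subtree_at S' w)"
    using S'(1) assms(2) unfolding is_tree_def subtree_at_def
    by (metis append.assoc append_Nil2 mem_Collect_eq)
  moreover have "subtree_at S' w \<subseteq> subtree_at S w"
    using S'(2) by (auto simp: subtree_at_def)
  moreover have "\<forall>a\<in>subtree_at S' w. children (subtree_at S' w) a \<in> \<A>"
    using S'(3) by (auto simp: subtree_at_def children_def)
  ultimately show ?thesis by (simp add: is_A_subtree_def)
qed

lemma A_subtree_lengths:
  assumes "is_A_subtree \<A> S S'" and ne: "\<And>X. X \<in> \<A> \<Longrightarrow> X \<noteq> {}"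
  shows "length ` S' = UNIV"
proof -
  have "\<exists>v\<in>S'. length v = n" for n
  proof (induction n)
    case 0
    then show ?case using assms(1) by (auto simp: is_A_subtree_def is_tree_def)
  next
    case (Suc n)
    then obtain v where v: "v \<in> S'" "length v = n" by auto
    then have "children S' v \<in> \<A>" using assms(1) by (auto simp: is_A_subtree_def)
    then obtain i where "v @ [i] \<in> S'" using ne by (fastforce simp: children_def)
    then show ?case using v by force
  qed
  then show ?thesis by (metis UNIV_eq_I image_iff)
qed

lemma infinite_vertices_with_A_subtree:
  assumes S': "is_A_subtree \<A> (subtree_at T v) S'" and ne: "\<And>X. X \<in> \<A> \<Longrightarrow> X \<noteq> {}"
  shows "infinite {u \<in> T. \<exists>S'. is_A_subtree \<A> (subtree_at T u) S'}"
proof -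
  have "infinite S'"
    using A_subtree_lengths[OF S' ne] by (metis finite_imageI infinite_UNIV_nat)
  then have "infinite ((@) v ` S')"
    by (simp add: finite_image_iff inj_on_def)
  moreover have "(@) v ` S' \<subseteq> {u \<in> T. \<exists>S'. is_A_subtree \<A> (subtree_at T u) S'}"
  proof clarify
    fix w assume "w \<in> S'"
    then have "w \<in> subtree_at T v" using S' by (auto simp: is_A_subtree_def)
    moreover have "subtree_at (subtree_at T v) w = subtree_at T (v @ w)"
      by (simp add: subtree_at_def)
    ultimately show "v @ w \<in> T \<and> (\<exists>S'. is_A_subtree \<A> (subtree_at T (v @ w)) S')"
      using is_A_subtree_subtree_at[OF S' \<open>w \<in> S'\<close>] by (auto simp: subtree_at_def)
  qed
  ultimately show ?thesis using finite_subset by blast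
qed

lemma up_closure_mono: "X \<in> up_closure \<A> \<Longrightarrow> X \<subseteq> Y \<Longrightarrow> Y \<in> up_closure \<A>"
  by (auto simp: up_closure_def)

fun good_to_depth :: "'a set set \<Rightarrow> nat \<Rightarrow> ('a list \<Rightarrow> 'a set) \<Rightarrow> bool" where
  "good_to_depth \<A> 0 \<omega> = True"
| "good_to_depth \<A> (Suc n) \<omega> \<longleftrightarrow> {i \<in> \<omega> []. good_to_depth \<A> n (descend [i] \<omega>)} \<in> up_closure \<A>"

definition good :: "'a set set \<Rightarrow> ('a list \<Rightarrow> 'a set) \<Rightarrow> bool" where
  "good \<A> \<omega> \<longleftrightarrow> (\<forall>n. good_to_depth \<A> n \<omega>)"

lemma good_to_depth_Suc_imp: "good_to_depth \<A> (Suc n) \<omega> \<Longrightarrow> good_to_depth \<A> n \<omega>"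
  by (induction n arbitrary: \<omega>) (auto elim!: up_closure_mono)

lemma good_to_depth_mono: "m \<le> n \<Longrightarrow> good_to_depth \<A> n \<omega> \<Longrightarrow> good_to_depth \<A> m \<omega>"
  by (induction n rule: dec_induct) (auto dest: good_to_depth_Suc_imp simp del: good_to_depth.simps)

lemma good_to_depth_GW_gen:
  assumes ne: "\<And>X. X \<in> \<A> \<Longrightarrow> X \<noteq> {}"
  shows "good_to_depth \<A> n \<omega> \<Longrightarrow> GW_gen \<omega> n \<noteq> {}"
proof (induction n arbitrary: \<omega>)
  case (Suc n)
  then obtain X where "X \<in> \<A>" "X \<subseteq> {i \<in> \<omega> []. good_to_depth \<A> n (descend [i] \<omega>)}"
    by (auto simp: up_closure_def)
  then obtain i where "i \<in> \<omega> []" "good_to_depth \<A> n (descend [i] \<omega>)" using ne by blast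
  then obtain v where "length v = n" "GW_word (descend [i] \<omega>) v" using Suc.IH by (auto simp: GW_gen_eq)
  then show ?case using \<open>i \<in> \<omega> []\<close> by (auto simp: GW_gen_eq intro!: exI[of _ "i # v"])
qed auto

lemma good_children:
  fixes \<omega> :: "'a::finite list \<Rightarrow> 'a set"
  assumes "good \<A> \<omega>"
  shows "{i \<in> \<omega> []. good \<A> (descend [i] \<omega>)} \<in> up_closure \<A>"
proof -
  \<comment> \<open>the finitely many children that are not good all fail at one common depth\<close>
  define bad where "bad = {i \<in> \<omega> []. \<not> good \<A> (descend [i] \<omega>)}"
  have "\<forall>i\<in>bad. \<exists>n. \<not> good_to_depth \<A> n (descend [i] \<omega>)"
    by (auto simp: bad_def good_def)
  then obtain depth where depth: "\<And>i. i \<in> bad \<Longrightarrow> \<not> good_to_depth \<A> (depth i) (descend [i] \<omega>)"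
    by metis
  define N where "N = (\<Sum>i\<in>bad. depth i)"
  have "{i \<in> \<omega> []. good_to_depth \<A> N (descend [i] \<omega>)} \<in> up_closure \<A>"
    using assms by (auto simp: good_def simp del: good_to_depth.simps intro: good_to_depth.simps(2)[THEN iffD1])
  moreover have "{i \<in> \<omega> []. good_to_depth \<A> N (descend [i] \<omega>)} \<subseteq> {i \<in> \<omega> []. good \<A> (descend [i] \<omega>)}"
  proof (clarify, rule ccontr)
    fix i assume i: "i \<in> \<omega> []" "good_to_depth \<A> N (descend [i] \<omega>)" "\<not> good \<A> (descend [i] \<omega>)"
    then have "i \<in> bad" by (simp add: bad_def)
    moreover have "depth i \<le> N"
      unfolding N_def using \<open>i \<in> bad\<close> by (intro member_le_sum) auto
    ultimately show False using depth good_to_depth_mono i(2) by blast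
  qed
  ultimately show ?thesis by (rule up_closure_mono)
qed

definition good_choice :: "'a set set \<Rightarrow> ('a list \<Rightarrow> 'a set) \<Rightarrow> 'a set" where
  "good_choice \<A> \<omega> = (SOME X. X \<in> \<A> \<and> X \<subseteq> {i \<in> \<omega> []. good \<A> (descend [i] \<omega>)})"

lemma good_choice:
  fixes \<omega> :: "'a::finite list \<Rightarrow> 'a set"
  assumes "good \<A> \<omega>"
  shows "good_choice \<A> \<omega> \<in> \<A>" "good_choice \<A> \<omega> \<subseteq> {i \<in> \<omega> []. good \<A> (descend [i] \<omega>)}"
proof -
  have "\<exists>X. X \<in> \<A> \<and> X \<subseteq> {i \<in> \<omega> []. good \<A> (descend [i] \<omega>)}"
    using good_children[OF assms] by (auto simp: up_closure_def)
  then show "good_choice \<A> \<omega> \<in> \<A>" "good_choice \<A> \<omega> \<subseteq> {i \<in> \<omega> []. good \<A> (descend [i] \<omega>)}"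
    unfolding good_choice_def by (metis (no_types, lifting) someI_ex)+
qed

lemma along_good_choice:
  fixes \<omega> :: "'a::finite list \<Rightarrow> 'a set"
  shows "good \<A> \<omega> \<Longrightarrow> along (good_choice \<A>) \<omega> v \<Longrightarrow> good \<A> (descend v \<omega>) \<and> GW_word \<omega> v"
proof (induction v arbitrary: \<omega>)
  case (Cons i v)
  then have "i \<in> \<omega> []" "good \<A> (descend [i] \<omega>)" using good_choice(2)[of \<A> \<omega>] by auto
  then show ?case using Cons.IH[of "descend [i] \<omega>"] Cons.prems by simp
qed simp

lemma good_imp_A_subtree:
  fixes \<omega> :: "'a::finite list \<Rightarrow> 'a set"
  assumes "good \<A> \<omega>"
  shows "is_A_subtree \<A> (GW_tree \<omega>) {v. along (good_choice \<A>) \<omega> v}"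
proof -
  have "is_tree {v. along (good_choice \<A>) \<omega> v}"
    by (auto simp: is_tree_def along_append)
  moreover have "{v. along (good_choice \<A>) \<omega> v} \<subseteq> GW_tree \<omega>"
    using along_good_choice[OF assms] by (auto simp: GW_tree_eq)
  moreover have "children {v. along (good_choice \<A>) \<omega> v} v \<in> \<A>" if "along (good_choice \<A>) \<omega> v" for v
    using good_choice(1) along_good_choice[OF assms that]
    by (auto simp: children_def along_append that)
  ultimately show ?thesis by (auto simp: is_A_subtree_def)
qed

section \<open>Monotonicity of \<open>g_fun\<close>\<close>

text \<open>\<open>thinning_prob I U s\<close> is the probability that the random subset of \<open>I\<close> retaining each
  element independently with probability \<open>1 - s\<close> lies in \<open>U\<close>; it is the law of \<open>Y\<close> in \<open>g_fun\<close>.\<close>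

definition thinning_prob :: "'a set \<Rightarrow> 'a set set \<Rightarrow> real \<Rightarrow> real" where
  "thinning_prob I U s = (\<Sum>Y\<in>Pow I. (1 - s) ^ card Y * s ^ card (I - Y) * (if Y \<in> U then 1 else 0))"

lemma thinning_prob_insert:
  assumes "finite I" "a \<notin> I"
  shows "thinning_prob (insert a I) U s = s * thinning_prob I U s + (1 - s) * thinning_prob I {Y. insert a Y \<in> U} s"
proof -
  have disj: "Pow I \<inter> insert a ` Pow I = {}" using assms(2) by auto
  have inj: "inj_on (insert a) (Pow I)" using assms(2) unfolding inj_on_def by (metis PowD insert_ident subset_iff)
  have without_a: "(\<Sum>Y\<in>Pow I. (1 - s) ^ card Y * s ^ card (insert a I - Y) * (if Y \<in> U then 1 else 0))
      = s * thinning_prob I U s"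
    unfolding thinning_prob_def sum_distrib_left
  proof (rule sum.cong[OF refl])
    fix Y assume "Y \<in> Pow I"
    then have "insert a I - Y = insert a (I - Y)" using assms(2) by auto
    then have "card (insert a I - Y) = Suc (card (I - Y))" using assms by simp
    then show "(1 - s) ^ card Y * s ^ card (insert a I - Y) * (if Y \<in> U then 1 else 0) =
        s * ((1 - s) ^ card Y * s ^ card (I - Y) * (if Y \<in> U then 1 else 0))" by simp
  qed
  have with_a: "(\<Sum>Y\<in>insert a ` Pow I. (1 - s) ^ card Y * s ^ card (insert a I - Y) * (if Y \<in> U then 1 else 0))
      = (1 - s) * thinning_prob I {Y. insert a Y \<in> U} s"
    unfolding thinning_prob_def sum_distrib_left sum.reindex[OF inj] o_def
  proof (rule sum.cong[OF refl])
    fix Y assume Y: "Y \<in> Pow I"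
    have "insert a I - insert a Y = I - Y" using Y assms(2) by auto
    moreover have "card (insert a Y) = Suc (card Y)"
      using Y assms by (metis PowD card_insert_disjoint finite_subset subsetD)
    ultimately show "(1 - s) ^ card (insert a Y) * s ^ card (insert a I - insert a Y) * (if insert a Y \<in> U then 1 else 0) =
        (1 - s) * ((1 - s) ^ card Y * s ^ card (I - Y) * (if Y \<in> {Y. insert a Y \<in> U} then 1 else 0))"
      by simp
  qed
  have fin: "finite (Pow I)" "finite (insert a ` Pow I)" using assms(1) by auto
  show ?thesis
    unfolding thinning_prob_def[of "insert a I"] Pow_insert sum.union_disjoint[OF fin disj]
    using without_a with_a by simp
qed

lemma thinning_prob_mono_set:
  assumes "finite I" "U' \<subseteq> U" "0 \<le> s" "s \<le> 1"
  shows "thinning_prob I U' s \<le> thinning_prob I U s"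
  unfolding thinning_prob_def using assms by (intro sum_mono mult_left_mono) auto

lemma thinning_prob_mono:
  assumes "finite I" and down: "\<And>Y Y'. Y \<in> U \<Longrightarrow> Y' \<subseteq> Y \<Longrightarrow> Y' \<in> U"
    and "0 \<le> s" "s \<le> t" "t \<le> 1"
  shows "thinning_prob I U s \<le> thinning_prob I U t"
  using assms
proof (induction I arbitrary: U rule: finite_induct)
  case empty
  show ?case by (simp add: thinning_prob_def)
next
  case (insert a I)
  define U\<^sub>a where "U\<^sub>a = {Y. insert a Y \<in> U}"
  have "U\<^sub>a \<subseteq> U" "\<And>Y Y'. Y \<in> U\<^sub>a \<Longrightarrow> Y' \<subseteq> Y \<Longrightarrow> Y' \<in> U\<^sub>a"
    using insert.prems(1) unfolding U\<^sub>a_def by blast+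
  then have le_U: "thinning_prob I U s \<le> thinning_prob I U t"
    and le_U\<^sub>a: "thinning_prob I U\<^sub>a s \<le> thinning_prob I U\<^sub>a t"
    and U\<^sub>a_le: "thinning_prob I U\<^sub>a t \<le> thinning_prob I U t"
    using insert by (auto intro!: thinning_prob_mono_set)
  have "s * thinning_prob I U s + (1 - s) * thinning_prob I U\<^sub>a s
      \<le> s * thinning_prob I U t + (1 - s) * thinning_prob I U\<^sub>a t"
    using insert.prems le_U le_U\<^sub>a by (intro add_mono mult_left_mono) auto
  also have "\<dots> \<le> t * thinning_prob I U t + (1 - t) * thinning_prob I U\<^sub>a t"
  proof -
    have "0 \<le> (t - s) * (thinning_prob I U t - thinning_prob I U\<^sub>a t)"
      using insert.prems U\<^sub>a_le by simp
    then show ?thesis by (simp add: algebra_simps)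
  qed
  finally show ?case using thinning_prob_insert[OF insert(1,2)] unfolding U\<^sub>a_def by simp
qed

lemma thinning_prob_supsets:
  assumes "finite I" "finite B"
  shows "thinning_prob I {Y. B \<subseteq> Y} s = (if B \<subseteq> I then (1 - s) ^ card B else 0)"
  using assms
proof (induction I arbitrary: B rule: finite_induct)
  case empty
  then show ?case by (simp add: thinning_prob_def)
next
  case (insert a I)
  have "{Y. B \<subseteq> insert a Y} = {Y. B - {a} \<subseteq> Y}" by blast
  then have "thinning_prob (insert a I) {Y. B \<subseteq> Y} s
      = s * thinning_prob I {Y. B \<subseteq> Y} s + (1 - s) * thinning_prob I {Y. B - {a} \<subseteq> Y} s"
    using thinning_prob_insert[OF insert(1,2)] by simp
  also have "\<dots> = (if B \<subseteq> insert a I then (1 - s) ^ card B else 0)"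
  proof (cases "a \<in> B")
    case True
    then have "\<not> B \<subseteq> I" "B - {a} \<subseteq> I \<longleftrightarrow> B \<subseteq> insert a I"
      using insert by auto
    moreover have "card B = Suc (card (B - {a}))"
      using card_Suc_Diff1[OF insert.prems True] by simp
    ultimately show ?thesis using insert.IH insert.prems by simp
  next
    case False
    then have "B - {a} = B" "B \<subseteq> insert a I \<longleftrightarrow> B \<subseteq> I" by auto
    then show ?thesis using insert.IH insert.prems by (simp add: algebra_simps)
  qed
  finally show ?case .
qed

lemma thinning_prob_UNIV:
  "thinning_prob (UNIV :: 'a::finite set) U s = (\<Sum>Y\<in>U. (1 - s) ^ card Y * s ^ card (UNIV - Y))"
proof -
  have "thinning_prob UNIV U s = (\<Sum>Y\<in>UNIV. if Y \<in> U then (1 - s) ^ card Y * s ^ card (UNIV - Y) else 0)"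
    unfolding thinning_prob_def Pow_UNIV by (rule sum.cong) auto
  also have "\<dots> = (\<Sum>Y\<in>UNIV \<inter> U. (1 - s) ^ card Y * s ^ card (UNIV - Y))"
    by (rule sum.inter_restrict[symmetric]) simp
  finally show ?thesis by simp
qed

lemma g_fun_eq_thinning_prob:
  fixes W :: "'a::finite set pmf"
  shows "g_fun W \<A> s = (\<Sum>B\<in>UNIV. pmf W B * thinning_prob UNIV {Y. B \<inter> Y \<notin> up_closure \<A>} s)"
  unfolding g_fun_def thinning_prob_def thin_weight_def sum_distrib_left Pow_UNIV
  by (simp add: mult.assoc)

lemma g_fun_mono:
  fixes W :: "'a::finite set pmf"
  assumes "0 \<le> s" "s \<le> t" "t \<le> 1"
  shows "g_fun W \<A> s \<le> g_fun W \<A> t"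
  unfolding g_fun_eq_thinning_prob
  using assms by (intro sum_mono mult_left_mono thinning_prob_mono) (auto simp: up_closure_def)

section \<open>Sub-fixed points of generating functions\<close>

lemma power_below_chord:
  fixes d x :: real
  assumes "0 \<le> d" "d < x" "x < 1"
  shows "(1 - d) * x ^ k \<le> (1 - x) * d ^ k + (x - d)"
    and "2 \<le> k \<Longrightarrow> (1 - d) * x ^ k < (1 - x) * d ^ k + (x - d)"
proof -
  define \<sigma>\<^sub>1 where "\<sigma>\<^sub>1 = (\<Sum>i<k. d ^ (k - Suc i) * x ^ i)"
  define \<sigma>\<^sub>2 where "\<sigma>\<^sub>2 = (\<Sum>i<k. x ^ (k - Suc i))"
  have "(1 - x) * d ^ k + (x - d) - (1 - d) * x ^ k = (x - d) * (1 - x ^ k) - (1 - x) * (x ^ k - d ^ k)"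
    by (simp add: algebra_simps)
  also have "\<dots> = (x - d) * (1 - x) * (\<sigma>\<^sub>2 - \<sigma>\<^sub>1)"
    unfolding \<sigma>\<^sub>1_def \<sigma>\<^sub>2_def power_diff_sumr2[of x k d] one_diff_power_eq'[of x k]
    by (simp add: algebra_simps)
  finally have gap: "(1 - x) * d ^ k + (x - d) - (1 - d) * x ^ k = (x - d) * (1 - x) * (\<sigma>\<^sub>2 - \<sigma>\<^sub>1)" .
  have term_le: "d ^ (k - Suc i) * x ^ i \<le> x ^ (k - Suc i)" for i
    using mult_mono[of "d ^ (k - Suc i)" "x ^ (k - Suc i)" "x ^ i" 1] assms
    by (simp add: power_mono power_le_one)
  have "\<sigma>\<^sub>1 \<le> \<sigma>\<^sub>2"
    unfolding \<sigma>\<^sub>1_def \<sigma>\<^sub>2_def by (intro sum_mono term_le)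
  then have "0 \<le> (x - d) * (1 - x) * (\<sigma>\<^sub>2 - \<sigma>\<^sub>1)"
    using assms by (intro mult_nonneg_nonneg) auto
  then show "(1 - d) * x ^ k \<le> (1 - x) * d ^ k + (x - d)"
    using gap by linarith
  assume "2 \<le> k"
  then have "x ^ (k - 1) < 1"
    using assms by (simp add: power_less_one_iff)
  have "\<sigma>\<^sub>1 < \<sigma>\<^sub>2"
    unfolding \<sigma>\<^sub>1_def \<sigma>\<^sub>2_def
  proof (rule sum_strict_mono_ex1)
    show "\<forall>i\<in>{..<k}. d ^ (k - Suc i) * x ^ i \<le> x ^ (k - Suc i)"
      using term_le by blast
    show "\<exists>i\<in>{..<k}. d ^ (k - Suc i) * x ^ i < x ^ (k - Suc i)"
      using \<open>2 \<le> k\<close> \<open>x ^ (k - 1) < 1\<close> by (intro bexI[of _ "k - 1"]) auto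
  qed simp
  then have "0 < (x - d) * (1 - x) * (\<sigma>\<^sub>2 - \<sigma>\<^sub>1)"
    using assms by (intro mult_pos_pos) auto
  then show "(1 - d) * x ^ k < (1 - x) * d ^ k + (x - d)"
    using gap by linarith
qed

lemma subfixpoint_le_fixpoint:
  fixes S :: "'b set" and p :: "'b \<Rightarrow> real" and k :: "'b \<Rightarrow> nat"
  defines "f \<equiv> \<lambda>y. \<Sum>B\<in>S. p B * y ^ k B"
  assumes "finite S" and p: "\<And>B. B \<in> S \<Longrightarrow> 0 \<le> p B" "(\<Sum>B\<in>S. p B) = 1"
    and b: "b \<in> S" "0 < p b" "2 \<le> k b"
    and d: "0 \<le> d" "f d = d" and x: "x < 1" "x \<le> f x"
  shows "x \<le> d"
proof (rule ccontr)
  assume "\<not> x \<le> d"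
  then have dx: "d < x" by simp
  \<comment> \<open>\<open>f\<close> lies strictly below its chord through \<open>(d, d)\<close> and \<open>(1, 1)\<close>, which passes through \<open>(x, x)\<close>.\<close>
  have "(1 - d) * f x = (\<Sum>B\<in>S. p B * ((1 - d) * x ^ k B))"
    by (simp add: f_def sum_distrib_left algebra_simps)
  also have "\<dots> < (\<Sum>B\<in>S. p B * ((1 - x) * d ^ k B + (x - d)))"
  proof (rule sum_strict_mono_ex1[OF \<open>finite S\<close>])
    show "\<forall>B\<in>S. p B * ((1 - d) * x ^ k B) \<le> p B * ((1 - x) * d ^ k B + (x - d))"
      using p(1) power_below_chord(1)[OF d(1) dx x(1)] by (auto intro: mult_left_mono)
    show "\<exists>B\<in>S. p B * ((1 - d) * x ^ k B) < p B * ((1 - x) * d ^ k B + (x - d))"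
      using b power_below_chord(2)[OF d(1) dx x(1)] by (intro bexI[of _ b]) auto
  qed
  also have "\<dots> = (1 - x) * f d + (x - d) * (\<Sum>B\<in>S. p B)"
    unfolding f_def sum_distrib_left sum.distrib[symmetric] by (rule sum.cong) (auto simp: algebra_simps)
  also have "\<dots> = (1 - d) * x"
    using d(2) p(2) by (simp add: algebra_simps)
  finally have "f x < x"
    using dx x(1) by simp
  with x(2) show False by simp
qed

lemma supercritical_two_children:
  fixes W :: "'a::finite set pmf"
  assumes "measure_pmf.expectation W (\<lambda>B. real (card B)) > 1"
  obtains b where "pmf W b > 0" "card b \<ge> 2"
proof -
  have "\<exists>b. pmf W b > 0 \<and> card b \<ge> 2"
  proof (rule ccontr)
    assume "\<nexists>b. pmf W b > 0 \<and> card b \<ge> 2"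
    then have small: "card B \<le> 1" if "pmf W B > 0" for B
      using that by force
    have "measure_pmf.expectation W (\<lambda>B. real (card B)) = (\<Sum>B\<in>UNIV. real (card B) * pmf W B)"
      by (rule integral_measure_pmf_real) auto
    also have "\<dots> \<le> (\<Sum>B\<in>UNIV. pmf W B)"
    proof (rule sum_mono)
      fix B :: "'a set"
      show "real (card B) * pmf W B \<le> pmf W B"
        using small[of B] pmf_nonneg[of W B] by (cases "pmf W B = 0") (auto simp: mult_le_cancel_right1)
    qed
    also have "\<dots> = 1" by (rule sum_pmf_eq_1) auto
    finally show False using assms by simp
  qed
  then show ?thesis using that by blast
qed

section \<open>The Galton-Watson measure\<close>

abbreviation GW_prob :: "'a set pmf \<Rightarrow> ('a list \<Rightarrow> 'a set) set \<Rightarrow> real" where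
  "GW_prob W \<equiv> measure (GW_space W)"

lemma prob_space_GW_space: "prob_space (GW_space W)"
  unfolding GW_space_def by (rule prob_space_PiM) (simp add: prob_space_measure_pmf)

lemma space_GW_space [simp]: "space (GW_space W) = UNIV"
  unfolding GW_space_def space_PiM by (simp add: PiE_UNIV_domain)

lemma UNIV_in_sets_GW_space [simp]: "UNIV \<in> sets (GW_space W)"
  using sets.top[of "GW_space W"] by simp

lemma measurable_GW_component: "(\<lambda>\<omega>. \<omega> v) \<in> GW_space W \<rightarrow>\<^sub>M measure_pmf W"
  unfolding GW_space_def by (rule measurable_component_singleton) simp

lemma sets_GW_component: "{\<omega>. P (\<omega> v)} \<in> sets (GW_space W)"
  using measurable_sets[OF measurable_GW_component, of "{B. P B}" W v] by (simp add: vimage_def)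

lemma measurable_descend: "descend v \<in> GW_space W \<rightarrow>\<^sub>M GW_space W"
proof -
  have "(\<lambda>\<omega> w. \<omega> (v @ w)) \<in> GW_space W \<rightarrow>\<^sub>M GW_space W"
    unfolding GW_space_def
    by (rule measurable_PiM_single') (auto intro: measurable_component_singleton)
  then show ?thesis by (simp add: descend_def [abs_def])
qed

lemma sets_descend_vimage: "S \<in> sets (GW_space W) \<Longrightarrow> {\<omega>. descend v \<omega> \<in> S} \<in> sets (GW_space W)"
  using measurable_sets[OF measurable_descend, of S W v] by (simp add: vimage_def)

definition branch_space :: "'a set pmf \<Rightarrow> ('a set \<times> ('a \<Rightarrow> 'a list \<Rightarrow> 'a set)) measure" where
  "branch_space W = measure_pmf W \<Otimes>\<^sub>M PiM UNIV (\<lambda>_. GW_space W)"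

definition graft :: "'a set \<times> ('a \<Rightarrow> 'a list \<Rightarrow> 'a set) \<Rightarrow> 'a list \<Rightarrow> 'a set" where
  "graft x v = (case v of [] \<Rightarrow> fst x | i # w \<Rightarrow> snd x i w)"

lemma graft_Nil [simp]: "graft x [] = fst x"
  by (simp add: graft_def)

lemma descend_graft [simp]: "descend [i] (graft x) = snd x i"
  by (auto simp: descend_def graft_def)

lemma space_branch_space [simp]: "space (branch_space W) = UNIV"
  unfolding branch_space_def space_pair_measure space_PiM by (simp add: PiE_UNIV_domain)

lemma measurable_graft: "graft \<in> branch_space W \<rightarrow>\<^sub>M GW_space W"
proof -
  have "(\<lambda>x. graft x v) \<in> branch_space W \<rightarrow>\<^sub>M measure_pmf W" for v
  proof (cases v)
    case Nil
    then show ?thesis by (simp add: branch_space_def)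
  next
    case (Cons i w)
    then have "(\<lambda>x. graft x v) = (\<lambda>\<omega>. \<omega> w) \<circ> (\<lambda>F. F i) \<circ> snd" by (auto simp: graft_def)
    moreover have "(\<lambda>F. F i) \<in> PiM UNIV (\<lambda>_. GW_space W) \<rightarrow>\<^sub>M GW_space W"
      by (rule measurable_component_singleton) simp
    then have "(\<lambda>\<omega>. \<omega> w) \<circ> (\<lambda>F. F i) \<in> PiM UNIV (\<lambda>_. GW_space W) \<rightarrow>\<^sub>M measure_pmf W"
      by (rule measurable_comp[OF _ measurable_GW_component])
    then have "(\<lambda>\<omega>. \<omega> w) \<circ> (\<lambda>F. F i) \<circ> snd \<in> branch_space W \<rightarrow>\<^sub>M measure_pmf W"
      unfolding branch_space_def by (rule measurable_comp[OF measurable_snd])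
    ultimately show ?thesis by simp
  qed
  then have "(\<lambda>x v. graft x v) \<in> branch_space W \<rightarrow>\<^sub>M GW_space W"
    unfolding GW_space_def by (intro measurable_PiM_single') auto
  then show ?thesis by simp
qed

lemma emeasure_branch_space_Times:
  fixes W :: "'a::finite set pmf"
  assumes C: "\<And>i. C i \<in> sets (GW_space W)"
  shows "emeasure (branch_space W) (B \<times> PiE UNIV C) =
    emeasure (measure_pmf W) B * (\<Prod>i\<in>UNIV. emeasure (GW_space W) (C i))"
proof -
  have "product_sigma_finite (\<lambda>_::'a. GW_space W)"
    unfolding product_sigma_finite_def by (auto intro: prob_space_imp_sigma_finite prob_space_GW_space)
  then have "emeasure (PiM UNIV (\<lambda>_. GW_space W)) (PiE UNIV C) = (\<Prod>i\<in>UNIV. emeasure (GW_space W) (C i))"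
    by (rule product_sigma_finite.emeasure_PiM) (auto intro: C)
  moreover have "sigma_finite_measure (PiM UNIV (\<lambda>_::'a. GW_space W))"
    by (rule prob_space_imp_sigma_finite[OF prob_space_PiM[OF prob_space_GW_space]])
  then have "emeasure (branch_space W) (B \<times> PiE UNIV C) =
      emeasure (measure_pmf W) B * emeasure (PiM UNIV (\<lambda>_. GW_space W)) (PiE UNIV C)"
    unfolding branch_space_def
    by (rule sigma_finite_measure.emeasure_pair_measure_Times) (auto intro!: sets_PiM_I_finite C)
  ultimately show ?thesis by simp
qed

lemma prod_words_split:
  fixes f :: "'a::finite list \<Rightarrow> 'c::comm_monoid_mult"
  assumes J: "finite J"
  shows "(\<Prod>v\<in>J. f v) = (if [] \<in> J then f [] else 1) * (\<Prod>i\<in>UNIV. \<Prod>w\<in>{w. i # w \<in> J}. f (i # w))"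
proof -
  have fin: "finite {w. i # w \<in> J}" for i
    using finite_vimageI[OF J, of "Cons i"] by (simp add: vimage_def)
  have bij: "bij_betw (\<lambda>(i, w). i # w) (SIGMA i:UNIV. {w. i # w \<in> J}) (J - {[]})"
    by (rule bij_betw_byWitness[where f'="\<lambda>v. (hd v, tl v)"]) (auto simp: neq_Nil_conv)
  have "(\<Prod>v\<in>J. f v) = (if [] \<in> J then f [] else 1) * (\<Prod>v\<in>J - {[]}. f v)"
    using J by (cases "[] \<in> J") (auto simp: prod.remove)
  also have "(\<Prod>v\<in>J - {[]}. f v) = (\<Prod>(i, w)\<in>(SIGMA i:UNIV. {w. i # w \<in> J}). f (i # w))"
    using prod.reindex_bij_betw[OF bij, of f] by (simp add: case_prod_unfold)
  also have "\<dots> = (\<Prod>i\<in>UNIV. \<Prod>w\<in>{w. i # w \<in> J}. f (i # w))"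
    by (rule prod.Sigma[symmetric]) (auto simp: fin)
  finally show ?thesis .
qed

lemma vimage_graft_cylinder:
  "graft -` {\<omega>. \<forall>v\<in>J. \<omega> v \<in> A v} =
    (if [] \<in> J then A [] else UNIV) \<times> PiE UNIV (\<lambda>i. {F. \<forall>w. i # w \<in> J \<longrightarrow> F w \<in> A (i # w)})"
  by (auto simp: PiE_UNIV_domain Pi_iff graft_def split: list.splits)

text \<open>The branching property: the offspring of the root and the outcomes \<open>descend [i] \<omega>\<close> seen
  from its children are independent, and each of the latter is distributed like \<open>\<omega>\<close>.\<close>

lemma distr_graft:
  fixes W :: "'a::finite set pmf"
  shows "distr (branch_space W) (GW_space W) graft = GW_space W"
proof (rule measure_eqI_PiM_infinite[where I=UNIV and M="\<lambda>_. measure_pmf W", symmetric])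
  show "finite_measure (GW_space W)"
    using prob_space_GW_space prob_space_def by blast
next
  fix J :: "'a list set" and A assume J: "finite J"
  let ?X = "prod_emb UNIV (\<lambda>_. measure_pmf W) J (PiE J A)"
  have X_eq: "?X = {\<omega>. \<forall>v\<in>J. \<omega> v \<in> A v}"
    by (auto simp: prod_emb_def PiE_def extensional_def restrict_def Pi_iff)
  define C where "C i = prod_emb UNIV (\<lambda>_. measure_pmf W) {w. i # w \<in> J} (PiE {w. i # w \<in> J} (\<lambda>w. A (i # w)))" for i
  have fin: "finite {w. i # w \<in> J}" for i
    using finite_vimageI[OF J, of "Cons i"] by (simp add: vimage_def)
  have C_eq: "C i = {F. \<forall>w. i # w \<in> J \<longrightarrow> F w \<in> A (i # w)}" for i
    by (auto simp: C_def prod_emb_def PiE_def extensional_def restrict_def Pi_iff)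
  have C_sets: "C i \<in> sets (GW_space W)" for i
    unfolding C_def GW_space_def by (rule sets_PiM_I) (auto simp: fin)
  have "emeasure (distr (branch_space W) (GW_space W) graft) ?X =
      emeasure (branch_space W) (graft -` ?X)"
    by (subst emeasure_distr[OF measurable_graft]) (auto simp: GW_space_def intro!: sets_PiM_I J)
  also have "\<dots> = emeasure (branch_space W) ((if [] \<in> J then A [] else UNIV) \<times> PiE UNIV C)"
    unfolding X_eq vimage_graft_cylinder C_eq ..
  also have "\<dots> = (if [] \<in> J then emeasure (measure_pmf W) (A []) else 1) *
      (\<Prod>i\<in>UNIV. \<Prod>w\<in>{w. i # w \<in> J}. emeasure (measure_pmf W) (A (i # w)))"
    unfolding emeasure_branch_space_Times[OF C_sets] C_def GW_space_def
    by (simp add: emeasure_PiM_emb fin prob_space_measure_pmf measure_pmf.emeasure_space_1[simplified])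
  also have "\<dots> = (\<Prod>v\<in>J. emeasure (measure_pmf W) (A v))"
    by (rule prod_words_split[OF J, symmetric])
  also have "\<dots> = emeasure (GW_space W) ?X"
    unfolding GW_space_def by (rule emeasure_PiM_emb[symmetric]) (auto simp: J prob_space_measure_pmf)
  finally show "emeasure (GW_space W) ?X = emeasure (distr (branch_space W) (GW_space W) graft) ?X" ..
qed (simp_all add: GW_space_def)

definition root_cylinder :: "'a set \<Rightarrow> ('a \<Rightarrow> ('a list \<Rightarrow> 'a set) set) \<Rightarrow> ('a list \<Rightarrow> 'a set) set" where
  "root_cylinder B C = {\<omega>. \<omega> [] = B \<and> (\<forall>i. descend [i] \<omega> \<in> C i)}"

lemma sets_root_cylinder:
  fixes W :: "'a::finite set pmf"
  assumes "\<And>i. C i \<in> sets (GW_space W)"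
  shows "root_cylinder B C \<in> sets (GW_space W)"
proof -
  have "root_cylinder B C = {\<omega>. \<omega> [] = B} \<inter> (\<Inter>i. {\<omega>. descend [i] \<omega> \<in> C i})"
    by (auto simp: root_cylinder_def)
  then show ?thesis
    using assms by (auto intro!: sets.Int sets_GW_component sets.finite_INT sets_descend_vimage)
qed

lemma measure_root_cylinder:
  fixes W :: "'a::finite set pmf"
  assumes C: "\<And>i. C i \<in> sets (GW_space W)"
  shows "GW_prob W (root_cylinder B C) = pmf W B * (\<Prod>i\<in>UNIV. GW_prob W (C i))"
proof -
  interpret G: prob_space "GW_space W" by (rule prob_space_GW_space)
  have "graft -` root_cylinder B C = {B} \<times> PiE UNIV C"
    by (auto simp: PiE_UNIV_domain root_cylinder_def)
  then have "emeasure (GW_space W) (root_cylinder B C) = emeasure (branch_space W) ({B} \<times> PiE UNIV C)"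
    using emeasure_distr[OF measurable_graft sets_root_cylinder[OF C]] distr_graft[of W] by simp
  also have "\<dots> = ennreal (pmf W B) * (\<Prod>i\<in>UNIV. ennreal (GW_prob W (C i)))"
    by (simp add: emeasure_branch_space_Times C emeasure_pmf_single G.emeasure_eq_measure)
  also have "\<dots> = ennreal (pmf W B * (\<Prod>i\<in>UNIV. GW_prob W (C i)))"
    by (simp add: prod_ennreal ennreal_mult prod_nonneg)
  finally show ?thesis
    by (simp add: G.emeasure_eq_measure prod_nonneg)
qed

lemma measure_root_children:
  fixes W :: "'a::finite set pmf" and R :: "'a set \<Rightarrow> 'a set \<Rightarrow> bool"
  assumes A: "A \<in> sets (GW_space W)"
  shows "{\<omega>. R (\<omega> []) {i. descend [i] \<omega> \<in> A}} \<in> sets (GW_space W)"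
    and "GW_prob W {\<omega>. R (\<omega> []) {i. descend [i] \<omega> \<in> A}} =
      (\<Sum>B\<in>UNIV. pmf W B * thinning_prob UNIV {Y. R B Y} (1 - GW_prob W A))"
proof -
  interpret G: prob_space "GW_space W" by (rule prob_space_GW_space)
  let ?p = "GW_prob W A"
  define C where "C Y i = (if i \<in> Y then A else UNIV - A)" for Y :: "'a set" and i
  define K where "K = Sigma UNIV (\<lambda>B. {Y. R B Y})"
  have C_sets: "C Y i \<in> sets (GW_space W)" for Y i
    using A by (auto simp: C_def)
  have in_cylinder: "\<omega> \<in> root_cylinder B (C Y) \<longleftrightarrow> \<omega> [] = B \<and> {i. descend [i] \<omega> \<in> A} = Y" for \<omega> B Y
    by (auto simp: root_cylinder_def C_def)
  have eq: "{\<omega>. R (\<omega> []) {i. descend [i] \<omega> \<in> A}} = (\<Union>(B, Y)\<in>K. root_cylinder B (C Y))"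
    by (auto simp: K_def in_cylinder)
  show "{\<omega>. R (\<omega> []) {i. descend [i] \<omega> \<in> A}} \<in> sets (GW_space W)"
    unfolding eq by (auto intro!: sets.finite_UN sets_root_cylinder C_sets)
  have disj: "disjoint_family_on (\<lambda>(B, Y). root_cylinder B (C Y)) K"
    by (auto simp: disjoint_family_on_def in_cylinder)
  have prod_C: "(\<Prod>i\<in>UNIV. GW_prob W (C Y i)) = ?p ^ card Y * (1 - ?p) ^ card (UNIV - Y)" for Y
  proof -
    have "(\<Prod>i\<in>UNIV. GW_prob W (C Y i)) = (\<Prod>i\<in>UNIV. if i \<in> Y then ?p else 1 - ?p)"
      by (rule prod.cong) (auto simp: C_def G.prob_compl[OF A, unfolded space_GW_space])
    also have "\<dots> = ?p ^ card Y * (1 - ?p) ^ card (UNIV - Y)"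
      by (simp add: prod.If_cases Int_def Diff_eq)
    finally show ?thesis .
  qed
  have "GW_prob W {\<omega>. R (\<omega> []) {i. descend [i] \<omega> \<in> A}} =
      (\<Sum>(B, Y)\<in>K. pmf W B * (?p ^ card Y * (1 - ?p) ^ card (UNIV - Y)))"
    unfolding eq
    by (subst G.finite_measure_finite_Union[OF _ _ disj])
       (auto simp: measure_root_cylinder C_sets prod_C intro!: sets_root_cylinder sum.cong)
  also have "\<dots> = (\<Sum>B\<in>UNIV. pmf W B * thinning_prob UNIV {Y. R B Y} (1 - ?p))"
    unfolding K_def thinning_prob_UNIV sum_distrib_left
    by (subst sum.Sigma[symmetric]) auto
  finally show "GW_prob W {\<omega>. R (\<omega> []) {i. descend [i] \<omega> \<in> A}} =
      (\<Sum>B\<in>UNIV. pmf W B * thinning_prob UNIV {Y. R B Y} (1 - ?p))" .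
qed

lemma measure_all_children:
  fixes W :: "'a::finite set pmf"
  assumes "A \<in> sets (GW_space W)"
  shows "{\<omega>. \<forall>i\<in>\<omega> []. descend [i] \<omega> \<in> A} \<in> sets (GW_space W)"
    and "GW_prob W {\<omega>. \<forall>i\<in>\<omega> []. descend [i] \<omega> \<in> A} = (\<Sum>B\<in>UNIV. pmf W B * GW_prob W A ^ card B)"
proof -
  have eq: "{\<omega>. \<forall>i\<in>\<omega> []. descend [i] \<omega> \<in> A} = {\<omega>. \<omega> [] \<subseteq> {i. descend [i] \<omega> \<in> A}}"
    by auto
  show "{\<omega>. \<forall>i\<in>\<omega> []. descend [i] \<omega> \<in> A} \<in> sets (GW_space W)"
    unfolding eq by (rule measure_root_children(1)[OF assms])
  show "GW_prob W {\<omega>. \<forall>i\<in>\<omega> []. descend [i] \<omega> \<in> A} = (\<Sum>B\<in>UNIV. pmf W B * GW_prob W A ^ card B)"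
    unfolding eq measure_root_children(2)[OF assms] by (simp add: thinning_prob_supsets)
qed

lemma measure_children_not_up_closure:
  fixes W :: "'a::finite set pmf"
  assumes "A \<in> sets (GW_space W)"
  shows "{\<omega>. {i \<in> \<omega> []. descend [i] \<omega> \<in> A} \<in> up_closure \<A>} \<in> sets (GW_space W)"
    and "GW_prob W {\<omega>. {i \<in> \<omega> []. descend [i] \<omega> \<in> A} \<notin> up_closure \<A>} = g_fun W \<A> (1 - GW_prob W A)"
proof -
  have "{i \<in> \<omega> []. descend [i] \<omega> \<in> A} = \<omega> [] \<inter> {i. descend [i] \<omega> \<in> A}" for \<omega>
    by auto
  then show "{\<omega>. {i \<in> \<omega> []. descend [i] \<omega> \<in> A} \<in> up_closure \<A>} \<in> sets (GW_space W)"
    and "GW_prob W {\<omega>. {i \<in> \<omega> []. descend [i] \<omega> \<in> A} \<notin> up_closure \<A>} = g_fun W \<A> (1 - GW_prob W A)"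
    using measure_root_children[OF assms] by (simp_all add: g_fun_eq_thinning_prob)
qed

section \<open>Good vertices and extinction\<close>

lemma sets_good_to_depth:
  fixes W :: "'a::finite set pmf"
  shows "{\<omega>. good_to_depth \<A> n \<omega>} \<in> sets (GW_space W)"
proof (induction n)
  case (Suc n)
  then show ?case using measure_children_not_up_closure(1)[OF Suc] by simp
qed simp

lemma not_good_eq: "{\<omega>. \<not> good \<A> \<omega>} = (\<Union>n. {\<omega>. \<not> good_to_depth \<A> n \<omega>})"
  by (auto simp: good_def)

lemma sets_not_good_to_depth:
  fixes W :: "'a::finite set pmf"
  shows "{\<omega>. \<not> good_to_depth \<A> n \<omega>} \<in> sets (GW_space W)"
  using sets.Diff[OF UNIV_in_sets_GW_space sets_good_to_depth] by (simp add: set_diff_eq)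

lemma sets_not_good:
  fixes W :: "'a::finite set pmf"
  shows "{\<omega>. \<not> good \<A> \<omega>} \<in> sets (GW_space W)"
  unfolding not_good_eq by (rule sets.countable_UN) (auto intro: sets_not_good_to_depth)

lemma sets_GW_word:
  fixes W :: "'a::finite set pmf"
  shows "{\<omega>. GW_word \<omega> v} \<in> sets (GW_space W)"
proof (induction v)
  case (Cons i v)
  have "{\<omega>. GW_word \<omega> (i # v)} = {\<omega>. i \<in> \<omega> []} \<inter> {\<omega>. descend [i] \<omega> \<in> {\<omega>. GW_word \<omega> v}}"
    by auto
  then show ?case using sets_GW_component sets_descend_vimage[OF Cons] by (metis sets.Int)
qed simp

definition no_good_vertex :: "'a set set \<Rightarrow> ('a list \<Rightarrow> 'a set) set" where
  "no_good_vertex \<A> = {\<omega>. \<forall>v. GW_word \<omega> v \<longrightarrow> \<not> good \<A> (descend v \<omega>)}"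

lemma sets_no_good_vertex:
  fixes W :: "'a::finite set pmf"
  shows "no_good_vertex \<A> \<in> sets (GW_space W)"
proof -
  have "{\<omega>. \<not> good \<A> (descend v \<omega>)} \<in> sets (GW_space W)" for v
    using sets_descend_vimage[OF sets_not_good] by simp
  moreover have "no_good_vertex \<A> = (\<Inter>v. (UNIV - {\<omega>. GW_word \<omega> v}) \<union> {\<omega>. \<not> good \<A> (descend v \<omega>)})"
    by (auto simp: no_good_vertex_def)
  ultimately show ?thesis
    by (auto intro!: sets.countable_INT sets.Un sets.Diff sets_GW_word)
qed

lemma no_good_vertex_not_good: "no_good_vertex \<A> \<subseteq> {\<omega>. \<not> good \<A> \<omega>}"
  unfolding no_good_vertex_def by (auto dest: spec[of _ "[]"])

lemma no_good_vertex_children: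
  "no_good_vertex \<A> \<subseteq> {\<omega>. \<forall>i\<in>\<omega> []. descend [i] \<omega> \<in> no_good_vertex \<A>}"
  unfolding no_good_vertex_def by auto

lemma good_vertex_imp_infinite_A_subtree_vertices:
  fixes \<omega> :: "'a::finite list \<Rightarrow> 'a set"
  assumes "\<omega> \<notin> no_good_vertex \<A>" and ne: "\<And>X. X \<in> \<A> \<Longrightarrow> X \<noteq> {}"
  shows "infinite {v \<in> GW_tree \<omega>. \<exists>S'. is_A_subtree \<A> (subtree_at (GW_tree \<omega>) v) S'}"
proof -
  obtain v where v: "GW_word \<omega> v" "good \<A> (descend v \<omega>)"
    using assms(1) by (auto simp: no_good_vertex_def)
  have "is_A_subtree \<A> (subtree_at (GW_tree \<omega>) v) {w. along (good_choice \<A>) (descend v \<omega>) w}"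
    using good_imp_A_subtree[OF v(2)] subtree_at_GW_tree[OF v(1)] by simp
  then show ?thesis by (rule infinite_vertices_with_A_subtree) (rule ne)
qed

definition extinct_by :: "nat \<Rightarrow> ('a list \<Rightarrow> 'a set) set" where
  "extinct_by n = {\<omega>. GW_gen \<omega> n = {}}"

lemma extinct_by_0: "extinct_by 0 = {}"
  by (simp add: extinct_by_def)

lemma extinct_by_Suc: "extinct_by (Suc n) = {\<omega>. \<forall>i\<in>\<omega> []. descend [i] \<omega> \<in> extinct_by n}"
  unfolding extinct_by_def GW_gen_Suc_Cons by auto

lemma incseq_extinct_by: "incseq extinct_by"
  by (rule incseq_SucI) (auto simp: extinct_by_def)

lemma sets_extinct_by:
  fixes W :: "'a::finite set pmf"
  shows "extinct_by n \<in> sets (GW_space W)"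
  by (induction n) (simp_all add: extinct_by_0 extinct_by_Suc measure_all_children(1))

lemma extinct_eq: "{\<omega>. \<not> nonextinct \<omega>} = (\<Union>n. extinct_by n)"
  by (auto simp: nonextinct_def extinct_by_def)

lemma extinct_imp_no_good_vertex:
  assumes ne: "\<And>X. X \<in> \<A> \<Longrightarrow> X \<noteq> {}" and "\<not> nonextinct \<omega>"
  shows "\<omega> \<in> no_good_vertex \<A>"
proof (unfold no_good_vertex_def, intro CollectI allI impI notI)
  fix v assume v: "GW_word \<omega> v" "good \<A> (descend v \<omega>)"
  obtain n where "\<omega> \<in> extinct_by n" using assms(2) extinct_eq by blast
  then have empty: "GW_gen \<omega> (length v + n) = {}"
    using monoD[OF incseq_extinct_by, of n "length v + n"] by (auto simp: extinct_by_def)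
  have "good_to_depth \<A> n (descend v \<omega>)" using v(2) by (simp add: good_def)
  then obtain w where "w \<in> GW_gen (descend v \<omega>) n" using good_to_depth_GW_gen[OF ne] by blast
  then have "v @ w \<in> GW_gen \<omega> (length v + n)"
    using v(1) by (simp add: GW_gen_eq along_append)
  then show False using empty by simp
qed

lemma prob_not_good_le_fixpoint:
  fixes W :: "'a::finite set pmf"
  assumes s: "0 \<le> s" "s \<le> 1" "g_fun W \<A> s = s"
  shows "GW_prob W {\<omega>. \<not> good \<A> \<omega>} \<le> s"
proof -
  interpret G: prob_space "GW_space W" by (rule prob_space_GW_space)
  have depth: "GW_prob W {\<omega>. \<not> good_to_depth \<A> n \<omega>} \<le> s" for n
  proof (induction n)
    case 0
    then show ?case using s by simp
  next
    case (Suc n)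
    have "GW_prob W {\<omega>. \<not> good_to_depth \<A> (Suc n) \<omega>} =
        GW_prob W {\<omega>. {i \<in> \<omega> []. descend [i] \<omega> \<in> {\<omega>. good_to_depth \<A> n \<omega>}} \<notin> up_closure \<A>}"
      by simp
    also have "\<dots> = g_fun W \<A> (1 - GW_prob W {\<omega>. good_to_depth \<A> n \<omega>})"
      by (rule measure_children_not_up_closure(2)[OF sets_good_to_depth])
    also have "1 - GW_prob W {\<omega>. good_to_depth \<A> n \<omega>} = GW_prob W {\<omega>. \<not> good_to_depth \<A> n \<omega>}"
      using G.prob_compl[OF sets_good_to_depth[of \<A> n W]] by (simp add: Compl_eq set_diff_eq)
    also have "g_fun W \<A> (GW_prob W {\<omega>. \<not> good_to_depth \<A> n \<omega>}) \<le> g_fun W \<A> s"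
      by (rule g_fun_mono) (use Suc s in auto)
    finally show ?case using s by simp
  qed
  have "incseq (\<lambda>n. {\<omega>. \<not> good_to_depth \<A> n \<omega>})"
    by (rule incseq_SucI) (auto dest: good_to_depth_Suc_imp simp del: good_to_depth.simps)
  then have "(\<lambda>n. GW_prob W {\<omega>. \<not> good_to_depth \<A> n \<omega>}) \<longlonglongrightarrow> GW_prob W {\<omega>. \<not> good \<A> \<omega>}"
    unfolding not_good_eq by (rule G.finite_Lim_measure_incseq[rotated]) (auto intro: sets_not_good_to_depth)
  then show ?thesis by (rule LIMSEQ_le_const2) (use depth in auto)
qed

lemma extinction_prob_fixpoint:
  fixes W :: "'a::finite set pmf"
  defines "q \<equiv> GW_prob W {\<omega>. \<not> nonextinct \<omega>}"
  shows "(\<Sum>B\<in>UNIV. pmf W B * q ^ card B) = q"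
proof -
  interpret G: prob_space "GW_space W" by (rule prob_space_GW_space)
  define f where "f y = (\<Sum>B\<in>UNIV. pmf W B * y ^ card B)" for y :: real
  have lim: "(\<lambda>n. GW_prob W (extinct_by n)) \<longlonglongrightarrow> q"
    unfolding q_def extinct_eq
    by (rule G.finite_Lim_measure_incseq[OF _ incseq_extinct_by]) (auto intro: sets_extinct_by)
  have "GW_prob W (extinct_by (Suc n)) = f (GW_prob W (extinct_by n))" for n
    unfolding extinct_by_Suc measure_all_children(2)[OF sets_extinct_by] f_def ..
  then have "(\<lambda>n. f (GW_prob W (extinct_by n))) \<longlonglongrightarrow> q"
    using LIMSEQ_Suc[OF lim] by simp
  moreover have "(\<lambda>n. f (GW_prob W (extinct_by n))) \<longlonglongrightarrow> f q"
    unfolding f_def by (intro tendsto_intros lim)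
  ultimately show ?thesis
    unfolding f_def[symmetric] by (rule LIMSEQ_unique[symmetric])
qed

lemma no_good_vertex_subfixpoint:
  fixes W :: "'a::finite set pmf" and \<A> :: "'a set set"
  defines "x \<equiv> GW_prob W (no_good_vertex \<A>)"
  shows "x \<le> (\<Sum>B\<in>UNIV. pmf W B * x ^ card B)"
proof -
  interpret G: prob_space "GW_space W" by (rule prob_space_GW_space)
  have "x \<le> GW_prob W {\<omega>. \<forall>i\<in>\<omega> []. descend [i] \<omega> \<in> no_good_vertex \<A>}"
    unfolding x_def
    by (rule G.finite_measure_mono[OF no_good_vertex_children measure_all_children(1)[OF sets_no_good_vertex]])
  then show ?thesis
    unfolding measure_all_children(2)[OF sets_no_good_vertex] x_def .
qed

lemma AE_no_good_vertex_imp_extinct: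
  fixes W :: "'a::finite set pmf"
  assumes supercrit: "measure_pmf.expectation W (\<lambda>B. real (card B)) > 1"
    and ne: "\<And>X. X \<in> \<A> \<Longrightarrow> X \<noteq> {}"
    and less_1: "GW_prob W (no_good_vertex \<A>) < 1"
  shows "AE \<omega> in GW_space W. \<omega> \<in> no_good_vertex \<A> \<longrightarrow> \<not> nonextinct \<omega>"
proof -
  interpret G: prob_space "GW_space W" by (rule prob_space_GW_space)
  let ?N = "no_good_vertex \<A>" and ?D = "{\<omega>. \<not> nonextinct \<omega>}"
  obtain b where b: "pmf W b > 0" "card b \<ge> 2"
    using supercritical_two_children[OF supercrit] by blast
  have D_sets: "?D \<in> sets (GW_space W)"
    unfolding extinct_eq by (rule sets.countable_UN) (auto intro: sets_extinct_by)
  have D_sub: "?D \<subseteq> ?N"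
    using extinct_imp_no_good_vertex[OF ne] by blast
  have "GW_prob W ?N \<le> GW_prob W ?D"
  proof (rule subfixpoint_le_fixpoint[where S=UNIV and p="pmf W" and k=card and b=b])
    show "(\<Sum>B\<in>UNIV. pmf W B) = 1"
      by (rule sum_pmf_eq_1) auto
    show "(\<Sum>B\<in>UNIV. pmf W B * GW_prob W ?D ^ card B) = GW_prob W ?D"
      by (rule extinction_prob_fixpoint)
    show "GW_prob W ?N \<le> (\<Sum>B\<in>UNIV. pmf W B * GW_prob W ?N ^ card B)"
      by (rule no_good_vertex_subfixpoint)
  qed (use b less_1 in auto)
  moreover have "GW_prob W ?D \<le> GW_prob W ?N"
    by (rule G.finite_measure_mono[OF D_sub sets_no_good_vertex])
  ultimately have "GW_prob W (?N - ?D) = 0"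
    using G.finite_measure_Diff[OF sets_no_good_vertex D_sets D_sub] by simp
  then have "?N - ?D \<in> null_sets (GW_space W)"
    using sets_no_good_vertex D_sets by (auto simp: G.emeasure_eq_measure null_sets_def)
  then show ?thesis
    by (rule AE_I') auto
qed

theorem corollary2p12:
  fixes W :: "'a::finite set pmf" and \<A> :: "'a set set"
  assumes pos: "\<And>i. measure_pmf.prob W {B. i \<in> B} > 0"
    and supercrit: "measure_pmf.expectation W (\<lambda>B. real (card B)) > 1"
    and A_ne: "\<A> \<noteq> {}"
    and A_elems_ne: "\<And>X. X \<in> \<A> \<Longrightarrow> X \<noteq> {}"
    and fixpt: "\<exists>s\<in>{0..1::real}. s < 1 \<and> g_fun W \<A> s = s"
  shows "AE \<omega> in GW_space W. nonextinct \<omega> \<longrightarrow>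
           infinite {v \<in> GW_tree \<omega>. \<exists>S'. is_A_subtree \<A> (subtree_at (GW_tree \<omega>) v) S'}"
proof -
  interpret G: prob_space "GW_space W" by (rule prob_space_GW_space)
  obtain s where s: "0 \<le> s" "s < 1" "g_fun W \<A> s = s"
    using fixpt by auto
  have "GW_prob W (no_good_vertex \<A>) \<le> GW_prob W {\<omega>. \<not> good \<A> \<omega>}"
    by (rule G.finite_measure_mono[OF no_good_vertex_not_good sets_not_good])
  also have "\<dots> \<le> s"
    using s by (intro prob_not_good_le_fixpoint) auto
  finally have "GW_prob W (no_good_vertex \<A>) < 1"
    using s(2) by linarith
  then have "AE \<omega> in GW_space W. \<omega> \<in> no_good_vertex \<A> \<longrightarrow> \<not> nonextinct \<omega>"
    using AE_no_good_vertex_imp_extinct supercrit A_elems_ne by blast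
  then show ?thesis
    by (rule eventually_mono) (use good_vertex_imp_infinite_A_subtree_vertices A_elems_ne in blast)
qed

end
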